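(* Let $\varphi$ be a finite conjunction of literals of the two forms $x\in y$ and $x = y\setminus z$ (with $x,y,z$ set variables), with finite set of variables $\mathrm{Vars}(\varphi)$. Let $M$ be a set assignment over $\mathrm{Vars}(\varphi)$ satisfying $\varphi$; let $\bar x,\bar y\in\mathrm{Vars}(\varphi)$, let $\overline{M}$ be a set assignment over $\mathrm{Vars}(\varphi)$ satisfying $\varphi$ with $\overline{M}\bar x\neq \overline{M}\bar y$, and let $\mathfrak{t}$ be a set belonging to exactly one of $\overline{M}\bar x$, $\overline{M}\bar y$. Fix a set $\mathfrak{s}$ with $\mathrm{rk}(\mathfrak{s})>\mathrm{rk}(M)$. Define $\mathsf{V}_0=\{u\in\mathrm{Vars}(\varphi)\mid \mathfrak{t}\in\overline{M}u\}$; $\mathsf{V}_n=\{u\in\mathrm{Vars}(\varphi)\mid Mu\cap\{Mw\mid w\in\mathsf{V}_{n-1}\}\neq\emptyset\}$ for $n\ge1$; $M_0v=Mv\cup\{\mathfrak{s}\}$ if $v\in\mathsf{V}_0$ and $M_0v=Mv$ otherwise; for $n\ge1$, $M_nv=M_{n-1}v\cup\{M_{n-1}u\mid u\in\mathsf{V}_{n-1},\ Mu\in Mv\}$ if $v\in\mathsf{V}_n$ and $M_nv=M_{n-1}v$ otherwise. Then for all $n\in\mathbb{N}$ and $v,x\in\mathrm{Vars}(\varphi)$: (a) $M_nv\neq\mathfrak{s}$; (b) $\mathfrak{s}\in M_nx$ if and only if $\mathfrak{s}\in M_0x$.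
   Context: A set assignment is a map from a finite set of set variables into the von Neumann universe $\mathcal{V}=\bigcup_\alpha\mathcal{V}_\alpha$, $\mathcal{V}_\alpha=\bigcup_{\beta<\alpha}\mathcal{P}(\mathcal{V}_\beta)$; it satisfies $x\in y$ iff $Mx\in My$ and $x=y\setminus z$ iff $Mx=My\setminus Mz$. The rank $\mathrm{rk}(s)$ of a set $s$ is the least ordinal $\alpha$ with $s\subseteq\mathcal{V}_\alpha$, and $\mathrm{rk}(M)=\max\{\mathrm{rk}(Mx)\mid x\in\mathrm{dom}(M)\}$. *)

theory Defs
  imports Main
begin

text \<open>A universe of pure sets is represented abstractly by a membership map
  elts :: 'v => 'v set (the elements of a set).  Every such structure is (Mostowski)
  isomorphic to a transitive class of von Neumann sets closed under these
  operations, e.g. a V_lambda with lambda a limit ordinal.\<close>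

definition set_universe :: "('v \<Rightarrow> 'v set) \<Rightarrow> bool" where
  "set_universe elts \<longleftrightarrow>
     inj elts \<and> wf {(x, y). x \<in> elts y} \<and>
     (\<forall>x F. finite F \<longrightarrow> (\<exists>y. elts y = elts x \<union> F))"

text \<open>Rank: rk s is the least ordinal alpha with s a subset of V_alpha, i.e.
  with rk y < alpha for every element y of s (since V_alpha is the set of sets
  of rank < alpha).  Ordinals are represented in an arbitrary well-order 'o,
  which is required to be large enough for this least element to exist.\<close>

definition is_rank :: "('v \<Rightarrow> 'v set) \<Rightarrow> ('v \<Rightarrow> 'o::wellorder) \<Rightarrow> bool" where
  "is_rank elts rk \<longleftrightarrow>
     (\<forall>x. (\<exists>\<alpha>. \<forall>y\<in>elts x. rk y < \<alpha>) \<and>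
          rk x = (LEAST \<alpha>. \<forall>y\<in>elts x. rk y < \<alpha>))"

definition adjoin :: "('v \<Rightarrow> 'v set) \<Rightarrow> 'v \<Rightarrow> 'v set \<Rightarrow> 'v" where
  "adjoin elts x F = (THE y. elts y = elts x \<union> F)"

datatype 'x literal = Mem 'x 'x | Diff 'x 'x 'x

fun lit_vars :: "'x literal \<Rightarrow> 'x set" where
  "lit_vars (Mem x y) = {x, y}"
| "lit_vars (Diff x y z) = {x, y, z}"

definition vars :: "'x literal list \<Rightarrow> 'x set" where
  "vars \<phi> = (\<Union>l\<in>set \<phi>. lit_vars l)"

fun holds_lit :: "('v \<Rightarrow> 'v set) \<Rightarrow> ('x \<Rightarrow> 'v) \<Rightarrow> 'x literal \<Rightarrow> bool" where
  "holds_lit elts M (Mem x y) \<longleftrightarrow> M x \<in> elts (M y)"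
| "holds_lit elts M (Diff x y z) \<longleftrightarrow> elts (M x) = elts (M y) - elts (M z)"

definition satisfies :: "('v \<Rightarrow> 'v set) \<Rightarrow> ('x \<Rightarrow> 'v) \<Rightarrow> 'x literal list \<Rightarrow> bool" where
  "satisfies elts M \<phi> \<longleftrightarrow> (\<forall>l\<in>set \<phi>. holds_lit elts M l)"

text \<open>The variable sets V_n (X = Vars(phi), Mb = the assignment M-bar).\<close>
primrec Vs :: "('v \<Rightarrow> 'v set) \<Rightarrow> 'x set \<Rightarrow> ('x \<Rightarrow> 'v) \<Rightarrow> ('x \<Rightarrow> 'v) \<Rightarrow> 'v \<Rightarrow> nat \<Rightarrow> 'x set" where
  "Vs elts X M Mb t 0 = {u \<in> X. t \<in> elts (Mb u)}"
| "Vs elts X M Mb t (Suc n) = {u \<in> X. elts (M u) \<inter> M ` Vs elts X M Mb t n \<noteq> {}}"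

primrec Ms :: "('v \<Rightarrow> 'v set) \<Rightarrow> 'x set \<Rightarrow> ('x \<Rightarrow> 'v) \<Rightarrow> ('x \<Rightarrow> 'v) \<Rightarrow> 'v \<Rightarrow> 'v \<Rightarrow> nat \<Rightarrow> 'x \<Rightarrow> 'v" where
  "Ms elts X M Mb t s 0 v =
     (if v \<in> Vs elts X M Mb t 0 then adjoin elts (M v) {s} else M v)"
| "Ms elts X M Mb t s (Suc n) v =
     (if v \<in> Vs elts X M Mb t (Suc n)
      then adjoin elts (Ms elts X M Mb t s n v)
             {Ms elts X M Mb t s n u | u. u \<in> Vs elts X M Mb t n \<and> M u \<in> elts (M v)}
      else Ms elts X M Mb t s n v)"

end

theory Submission
  imports Defs
begin

text \<open>Every value M_n v that differs from M v has \<open>s\<close> in its transitive closure,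
  because whatever is adjoined at stage n is either \<open>s\<close> itself or a value already
  changed at stage n - 1. By foundation such a value is not \<open>s\<close>, and an unchanged
  value M v is not \<open>s\<close> since its rank is smaller. Hence \<open>s\<close> is never among the sets
  adjoined at a positive stage, which gives (b).\<close>

definition mem_rel :: "('v \<Rightarrow> 'v set) \<Rightarrow> 'v rel" where
  "mem_rel elts = {(x, y). x \<in> elts y}"

lemma wf_mem_rel: "set_universe elts \<Longrightarrow> wf (mem_rel elts)"
  unfolding set_universe_def mem_rel_def by blast

lemma elts_adjoin:
  assumes "set_universe elts" and "finite F"
  shows "elts (adjoin elts x F) = elts x \<union> F"
proof -
  have "inj elts" and "\<exists>y. elts y = elts x \<union> F"
    using assms unfolding set_universe_def by blast+
  then have "\<exists>!y. elts y = elts x \<union> F" by (metis injD)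
  then show ?thesis unfolding adjoin_def by (rule theI')
qed

lemma finite_vars: "finite (vars \<phi>)"
proof -
  have "finite (lit_vars l)" for l :: "'x literal" by (cases l) auto
  then show ?thesis unfolding vars_def by blast
qed

lemma Vs_subset: "Vs elts X M Mb t n \<subseteq> X"
  by (cases n) auto

lemma trancl_mem_rel_mono:
  assumes "(a, b) \<in> (mem_rel elts)\<^sup>+" and "elts b \<subseteq> elts c"
  shows "(a, c) \<in> (mem_rel elts)\<^sup>+"
proof -
  from assms(1) obtain z where "(a, z) \<in> (mem_rel elts)\<^sup>*" and "z \<in> elts b"
    by (auto simp: mem_rel_def dest: tranclD2)
  with assms(2) show ?thesis
    by (auto simp: mem_rel_def intro: rtrancl_into_trancl1)
qed

context
  fixes elts :: "'v \<Rightarrow> 'v set" and X :: "'x set" and M Mb :: "'x \<Rightarrow> 'v" and t s :: 'v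
  assumes universe: "set_universe elts" and finite_X: "finite X"
begin

lemma elts_Ms_0:
  "elts (Ms elts X M Mb t s 0 v) =
     elts (M v) \<union> (if v \<in> Vs elts X M Mb t 0 then {s} else {})"
  using elts_adjoin[OF universe] by simp

lemma elts_Ms_Suc:
  "elts (Ms elts X M Mb t s (Suc n) v) =
     elts (Ms elts X M Mb t s n v) \<union>
     (if v \<in> Vs elts X M Mb t (Suc n)
      then {Ms elts X M Mb t s n u | u. u \<in> Vs elts X M Mb t n \<and> M u \<in> elts (M v)}
      else {})"
proof -
  let ?F = "{Ms elts X M Mb t s n u | u. u \<in> Vs elts X M Mb t n \<and> M u \<in> elts (M v)}"
  have "?F \<subseteq> Ms elts X M Mb t s n ` X"
    using Vs_subset[of elts X M Mb t n] by blast
  then have "finite ?F"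
    using finite_X by (blast intro: finite_subset)
  then show ?thesis by (simp add: elts_adjoin[OF universe])
qed

lemma elts_Ms_mono: "elts (Ms elts X M Mb t s n v) \<subseteq> elts (Ms elts X M Mb t s (Suc n) v)"
  unfolding elts_Ms_Suc by blast

lemma Ms_changed_imp_trancl:
  "Ms elts X M Mb t s n v \<noteq> M v \<Longrightarrow> (s, Ms elts X M Mb t s n v) \<in> (mem_rel elts)\<^sup>+"
proof (induction n arbitrary: v)
  case 0
  then have "v \<in> Vs elts X M Mb t 0" by (metis Ms.simps(1))
  then have "s \<in> elts (Ms elts X M Mb t s 0 v)" unfolding elts_Ms_0 by simp
  then show ?case by (auto simp: mem_rel_def)
next
  case (Suc n)
  show ?case
  proof (cases "Ms elts X M Mb t s n v = M v")
    case False
    then have "(s, Ms elts X M Mb t s n v) \<in> (mem_rel elts)\<^sup>+" by (rule Suc.IH)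
    then show ?thesis using elts_Ms_mono by (rule trancl_mem_rel_mono)
  next
    case True
    let ?F = "{Ms elts X M Mb t s n u | u. u \<in> Vs elts X M Mb t n \<and> M u \<in> elts (M v)}"
    have "v \<in> Vs elts X M Mb t (Suc n)"
      using Suc.prems True by (metis Ms.simps(2))
    then have elts_Suc: "elts (Ms elts X M Mb t s (Suc n) v) = elts (M v) \<union> ?F"
      unfolding elts_Ms_Suc True by simp
    moreover have "elts (Ms elts X M Mb t s (Suc n) v) \<noteq> elts (M v)"
      using Suc.prems universe unfolding set_universe_def by (metis injD)
    ultimately obtain u where u: "u \<in> Vs elts X M Mb t n" "M u \<in> elts (M v)"
      "Ms elts X M Mb t s n u \<notin> elts (M v)"
      by blast
    then have "Ms elts X M Mb t s n u \<noteq> M u" by metis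
    then have "(s, Ms elts X M Mb t s n u) \<in> (mem_rel elts)\<^sup>+" by (rule Suc.IH)
    moreover have "(Ms elts X M Mb t s n u, Ms elts X M Mb t s (Suc n) v) \<in> mem_rel elts"
      using u elts_Suc by (auto simp: mem_rel_def)
    ultimately show ?thesis ..
  qed
qed

lemma Ms_neq_if_M_neq:
  assumes "M v \<noteq> s"
  shows "Ms elts X M Mb t s n v \<noteq> s"
proof
  assume "Ms elts X M Mb t s n v = s"
  with assms have "(s, s) \<in> (mem_rel elts)\<^sup>+"
    using Ms_changed_imp_trancl by metis
  then show False
    using wf_trancl[OF wf_mem_rel[OF universe]] by (meson wf_not_refl)
qed

lemma mem_Ms_iff_mem_Ms_0:
  assumes "\<forall>u\<in>X. M u \<noteq> s"
  shows "s \<in> elts (Ms elts X M Mb t s n x) \<longleftrightarrow> s \<in> elts (Ms elts X M Mb t s 0 x)"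
proof (induction n)
  case 0
  show ?case ..
next
  case (Suc n)
  have "s \<notin> {Ms elts X M Mb t s n u | u. u \<in> Vs elts X M Mb t n \<and> M u \<in> elts (M x)}"
  proof
    assume "s \<in> {Ms elts X M Mb t s n u | u. u \<in> Vs elts X M Mb t n \<and> M u \<in> elts (M x)}"
    then obtain u where "s = Ms elts X M Mb t s n u" and "u \<in> Vs elts X M Mb t n"
      by blast
    then show False
      using assms Ms_neq_if_M_neq Vs_subset[of elts X M Mb t n] by (metis subsetD)
  qed
  then show ?case
    unfolding elts_Ms_Suc using Suc.IH by auto
qed

end

theorem lemma6:
  fixes elts :: "'v \<Rightarrow> 'v set" and rk :: "'v \<Rightarrow> 'o::wellorder"
    and \<phi> :: "'x literal list" and M Mb :: "'x \<Rightarrow> 'v"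
    and xb yb :: 'x and t s :: 'v
  assumes "set_universe elts" and "is_rank elts rk"
    and "satisfies elts M \<phi>"
    and "xb \<in> vars \<phi>" and "yb \<in> vars \<phi>"
    and "satisfies elts Mb \<phi>" and "Mb xb \<noteq> Mb yb"
    and "(t \<in> elts (Mb xb)) \<noteq> (t \<in> elts (Mb yb))"
    and "rk s > Max ((\<lambda>x. rk (M x)) ` vars \<phi>)"
  shows "\<forall>n::nat. \<forall>v\<in>vars \<phi>. \<forall>x\<in>vars \<phi>.
           Ms elts (vars \<phi>) M Mb t s n v \<noteq> s \<and>
           (s \<in> elts (Ms elts (vars \<phi>) M Mb t s n x) \<longleftrightarrow>
            s \<in> elts (Ms elts (vars \<phi>) M Mb t s 0 x))"
proof -
  have M_neq_s: "\<forall>u\<in>vars \<phi>. M u \<noteq> s"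
  proof
    fix u assume "u \<in> vars \<phi>"
    then have "rk (M u) \<le> Max ((\<lambda>x. rk (M x)) ` vars \<phi>)"
      by (intro Max_ge) (simp_all add: finite_vars)
    then show "M u \<noteq> s" using assms(9) by auto
  qed
  show ?thesis
  proof (intro allI ballI conjI)
    fix n v assume "v \<in> vars \<phi>"
    with M_neq_s have "M v \<noteq> s" by blast
    then show "Ms elts (vars \<phi>) M Mb t s n v \<noteq> s"
      by (rule Ms_neq_if_M_neq[OF assms(1) finite_vars])
  next
    fix n x
    show "s \<in> elts (Ms elts (vars \<phi>) M Mb t s n x) \<longleftrightarrow>
          s \<in> elts (Ms elts (vars \<phi>) M Mb t s 0 x)"
      by (rule mem_Ms_iff_mem_Ms_0[OF assms(1) finite_vars M_neq_s])
  qed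
qed

end
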